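(* Let $i\geq 1$. For $n\geq 0$, let $M(i,n)$ be the set of pairs $(L_1,L_2)$ of walks of length $n$ with steps $(1,1)$ and $(1,-1)$, where $L_1$ starts at $(0,0)$ and $L_2$ starts at $(0,2i)$, such that $L_1$ and $L_2$ intersect (share a common lattice point). Let $M_i(t)=\sum_{n\geq0}|M(i,n)|t^n$. Let $C(t)=\sum_{n\geq0}\frac{1}{n+1}\binom{2n}{n}t^n$ and $D(t)=tC^2(t)$. Then $$M_i(t)=\frac{D^i(t)}{1-4t}.$$ *)

theory Defs
  imports "HOL-Computational_Algebra.Formal_Power_Series"
begin

text \<open>A walk of length n with steps (1,1),(1,-1) is encoded by its list of vertical steps,
  each in {1,-1}. Starting at (0,h), after k steps it is at (k, h + sum of first k steps).\<close>

definition steps :: "nat \<Rightarrow> int list set" where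
  "steps n = {s. length s = n \<and> set s \<subseteq> {1, -1}}"

definition walk_points :: "int \<Rightarrow> int list \<Rightarrow> (int \<times> int) set" where
  "walk_points h s = {(int k, h + sum_list (take k s)) | k. k \<le> length s}"

definition M :: "nat \<Rightarrow> nat \<Rightarrow> (int list \<times> int list) set" where
  "M i n = {(s1, s2). s1 \<in> steps n \<and> s2 \<in> steps n \<and>
             walk_points 0 s1 \<inter> walk_points (2 * int i) s2 \<noteq> {}}"

definition M_gf :: "nat \<Rightarrow> real fps" where
  "M_gf i = Abs_fps (\<lambda>n. real (card (M i n)))"

definition C_gf :: "real fps" where
  "C_gf = Abs_fps (\<lambda>n. real ((2 * n) choose n) / real (n + 1))"

definition D_gf :: "real fps" where
  "D_gf = fps_X * C_gf ^ 2"

end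

theory Submission
  imports Defs
begin

unbundle fps_syntax

text \<open>
  Two walks started at heights 0 and h meet at time 0 iff h = 0; otherwise, after one common
  step (four choices of step pair) the continuations must meet with the new gap h - 2, h + 2,
  or h, the last arising twice.  So the numbers a_j(n) of meeting pairs with initial gap 2j
  satisfy a_0(n) = 4^n and, for j \<ge> 1, a_j(0) = 0 and
  a_j(n+1) = a_{j-1}(n) + 2 a_j(n) + a_{j+1}(n).
  Since D = t (1 + D)^2, which is the Catalan equation C = 1 + t C^2, the coefficients of
  D^j / (1 - 4t) obey the same recurrence with the same initial values.  The Catalan equation
  itself follows from 1 - 2tC = (1 - 4t)^(1/2), read off the binomial series.
\<close>

definition walks_meet :: "int \<Rightarrow> int list \<Rightarrow> int list \<Rightarrow> bool" where
  "walks_meet h s1 s2 \<longleftrightarrow> (\<exists>k\<le>length s1. sum_list (take k s1) = h + sum_list (take k s2))"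

definition meeting_pairs :: "int \<Rightarrow> nat \<Rightarrow> (int list \<times> int list) set" where
  "meeting_pairs h n = {(s1, s2). s1 \<in> steps n \<and> s2 \<in> steps n \<and> walks_meet h s1 s2}"

lemma walk_points_meet_iff_walks_meet:
  assumes "length s1 = length s2"
  shows "walk_points 0 s1 \<inter> walk_points h s2 \<noteq> {} \<longleftrightarrow> walks_meet h s1 s2"
  using assms unfolding walk_points_def walks_meet_def by auto

lemma M_eq_meeting_pairs: "M i n = meeting_pairs (2 * int i) n"
proof -
  have "walk_points 0 s1 \<inter> walk_points (2 * int i) s2 \<noteq> {} \<longleftrightarrow> walks_meet (2 * int i) s1 s2"
    if "s1 \<in> steps n" "s2 \<in> steps n" for s1 s2
    using that by (intro walk_points_meet_iff_walks_meet) (simp add: steps_def)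
  then show ?thesis
    unfolding M_def meeting_pairs_def by blast
qed

lemma walks_meet_Cons:
  "walks_meet h (a # s1) (b # s2) \<longleftrightarrow> h = 0 \<or> walks_meet (h + b - a) s1 s2"
proof
  assume "walks_meet h (a # s1) (b # s2)"
  then obtain k where "k \<le> Suc (length s1)"
    and "sum_list (take k (a # s1)) = h + sum_list (take k (b # s2))"
    unfolding walks_meet_def by auto
  then show "h = 0 \<or> walks_meet (h + b - a) s1 s2"
    unfolding walks_meet_def by (cases k) auto
next
  assume "h = 0 \<or> walks_meet (h + b - a) s1 s2"
  then show "walks_meet h (a # s1) (b # s2)"
    unfolding walks_meet_def
    by (elim disjE exE conjE) (force intro: exI[of _ 0], force intro: exI[of _ "Suc _"])
qed

lemma walks_meet_0: "walks_meet 0 s1 s2"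
  unfolding walks_meet_def by (auto intro: exI[of _ 0])

lemma Cons_in_steps_Suc: "a # s \<in> steps (Suc n) \<longleftrightarrow> a \<in> {1, -1} \<and> s \<in> steps n"
  by (auto simp: steps_def)

lemma in_steps_Suc_iff: "s \<in> steps (Suc n) \<longleftrightarrow> (\<exists>a t. s = a # t \<and> a \<in> {1, -1} \<and> t \<in> steps n)"
  by (cases s) (auto simp: steps_def)

lemma finite_steps: "finite (steps n)"
  using finite_lists_length_eq[of "{1, -1 :: int}" n] by (simp add: steps_def conj_commute)

lemma card_steps: "card (steps n) = 2 ^ n"
  using card_lists_length_eq[of "{1, -1 :: int}" n] by (simp add: steps_def conj_commute numeral_2_eq_2)

lemma finite_meeting_pairs: "finite (meeting_pairs h n)"
  by (rule finite_subset[of _ "steps n \<times> steps n"]) (auto simp: meeting_pairs_def finite_steps)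

lemma meeting_pairs_Suc:
  assumes "h \<noteq> 0"
  shows "meeting_pairs h (Suc n) = (\<lambda>((a, b), (s1, s2)). (a # s1, b # s2)) `
           (SIGMA (a, b) : {1, -1} \<times> {1, -1}. meeting_pairs (h + b - a) n)"
    (is "_ = ?Cons2 ` ?S")
proof
  show "meeting_pairs h (Suc n) \<subseteq> ?Cons2 ` ?S"
  proof
    fix p assume "p \<in> meeting_pairs h (Suc n)"
    then obtain a b s1 s2 where "p = (a # s1, b # s2)" "a \<in> {1, -1}" "b \<in> {1, -1}"
      "s1 \<in> steps n" "s2 \<in> steps n" "walks_meet h (a # s1) (b # s2)"
      unfolding meeting_pairs_def in_steps_Suc_iff by blast
    with assms show "p \<in> ?Cons2 ` ?S"
      by (intro image_eqI[of _ _ "((a, b), (s1, s2))"]) (auto simp: meeting_pairs_def walks_meet_Cons)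
  qed
  show "?Cons2 ` ?S \<subseteq> meeting_pairs h (Suc n)"
    by (auto simp: meeting_pairs_def walks_meet_Cons Cons_in_steps_Suc)
qed

lemma card_meeting_pairs_Suc:
  assumes "h \<noteq> 0"
  shows "card (meeting_pairs h (Suc n)) =
           card (meeting_pairs (h - 2) n) + 2 * card (meeting_pairs h n)
           + card (meeting_pairs (h + 2) n)"
proof -
  let ?Cons2 = "\<lambda>((a, b), (s1, s2)). (a # s1, b # s2 :: int list)"
  let ?S = "SIGMA (a, b) : {1, -1} \<times> {1, -1}. meeting_pairs (h + b - a) n"
  have "inj_on ?Cons2 ?S"
    by (auto simp: inj_on_def)
  then have "card (meeting_pairs h (Suc n)) = card ?S"
    unfolding meeting_pairs_Suc[OF assms] by (rule card_image)
  also have "\<dots> = (\<Sum>(a, b) \<in> {1, -1} \<times> {1, -1}. card (meeting_pairs (h + b - a) n))"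
    by (subst card_SigmaI) (auto simp: finite_meeting_pairs split_def)
  also have "{1, -1} \<times> {1, -1 :: int} = {(1, 1), (1, -1), (-1, 1), (-1, -1)}"
    by auto
  finally show ?thesis
    by (simp add: algebra_simps)
qed

lemma card_meeting_pairs_0: "card (meeting_pairs 0 n) = 4 ^ n"
proof -
  have "meeting_pairs 0 n = steps n \<times> steps n"
    by (auto simp: meeting_pairs_def walks_meet_0)
  then show ?thesis
    by (simp add: card_cartesian_product card_steps power_mult_distrib[symmetric])
qed

lemma card_M_0: "card (M 0 n) = 4 ^ n"
  by (simp add: M_eq_meeting_pairs card_meeting_pairs_0)

lemma M_Suc_0: "M (Suc j) 0 = {}"
  by (simp add: M_eq_meeting_pairs meeting_pairs_def walks_meet_def steps_def)

lemma card_M_Suc: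
  "card (M (Suc j) (Suc n)) = card (M j n) + 2 * card (M (Suc j) n) + card (M (Suc (Suc j)) n)"
proof -
  have "2 * int (Suc j) - 2 = 2 * int j" "2 * int (Suc j) + 2 = 2 * int (Suc (Suc j))"
    by simp_all
  then show ?thesis
    unfolding M_eq_meeting_pairs using card_meeting_pairs_Suc[of "2 * int (Suc j)" n] by simp
qed

lemma Suc_times_central_binomial:
  "Suc m * (2 * Suc m choose Suc m) = 2 * (Suc (2 * m) * (2 * m choose m))"
proof -
  have "Suc m * (2 * Suc m choose Suc m) = Suc (Suc (2 * m)) * (Suc (2 * m) choose m)"
    using Suc_times_binomial[of m "Suc (2 * m)"] by simp
  also have "Suc (2 * m) choose m = Suc (2 * m) choose Suc m"
    using binomial_symmetric[of m "Suc (2 * m)"] by simp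
  also have "Suc (Suc (2 * m)) * \<dots> = 2 * (Suc m * \<dots>)"
    by simp
  also have "Suc m * (Suc (2 * m) choose Suc m) = Suc (2 * m) * (2 * m choose m)"
    using Suc_times_binomial_eq[of "2 * m" m] by simp
  finally show ?thesis .
qed

lemma neg4_power_times_neg_half_gchoose:
  "(-4) ^ m * ((-1/2 :: real) gchoose m) = real (2 * m choose m)"
proof (induction m)
  case 0
  show ?case by simp
next
  case (Suc m)
  define g where "g = (-1/2 :: real) gchoose m"
  have "(-1/2 :: real) gchoose Suc m = (-1/2 - real m) * g / real (Suc m)"
    using gbinomial_mult_1[of "-1/2 :: real" m] by (simp add: g_def field_simps)
  then have "(-4) ^ Suc m * ((-1/2 :: real) gchoose Suc m)
      = (-4 * (-4) ^ m) * ((-1/2 - real m) * g / real (Suc m))"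
    by (simp only: power_Suc)
  also have "\<dots> = (4 * real m + 2) * ((-4) ^ m * g) / real (Suc m)"
    by (simp add: field_simps)
  also have "\<dots> = real (2 * Suc m choose Suc m)"
    using Suc.IH arg_cong[OF Suc_times_central_binomial[of m], of real]
    by (simp add: g_def divide_simps algebra_simps)
  finally show ?case .
qed

lemma neg4_power_times_half_gchoose_Suc:
  "(-4) ^ Suc m * ((1/2 :: real) gchoose Suc m) = - 2 * real (2 * m choose m) / real (Suc m)"
proof -
  have "(1/2 :: real) gchoose Suc m = (1/2) / real (Suc m) * ((-1/2) gchoose m)"
    using gbinomial_factors[of "-1/2 :: real" m] by simp
  then have "(-4) ^ Suc m * ((1/2 :: real) gchoose Suc m)
      = (-4 * (-4) ^ m) * ((1/2) / real (Suc m) * ((-1/2) gchoose m))"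
    by (simp only: power_Suc)
  also have "\<dots> = - 2 * ((-4) ^ m * ((-1/2) gchoose m)) / real (Suc m)"
    by (simp add: field_simps)
  also have "\<dots> = - 2 * real (2 * m choose m) / real (Suc m)"
    by (simp only: neg4_power_times_neg_half_gchoose)
  finally show ?thesis .
qed

lemma C_gf_eq: "C_gf = 1 + fps_X * C_gf ^ 2"
proof -
  define B where "B = fps_binomial (1/2 :: real) oo (fps_const (-4) * fps_X)"
  have "B ^ 2 = fps_binomial (1/2) ^ 2 oo (fps_const (-4) * fps_X)"
    unfolding B_def power2_eq_square by (simp add: fps_compose_mult_distrib)
  also have "fps_binomial (1/2 :: real) ^ 2 = 1 + fps_X"
    by (simp add: fps_binomial_power fps_binomial_1)
  also have "(1 + fps_X) oo (fps_const (-4) * fps_X) = (1 - 4 * fps_X :: real fps)"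
  proof (rule fps_ext)
    fix n
    show "((1 + fps_X) oo (fps_const (-4) * fps_X)) $ n = (1 - 4 * fps_X :: real fps) $ n"
      by (cases n) (auto simp: fps_compose_linear numeral_fps_const)
  qed
  finally have B_square: "B ^ 2 = 1 - 4 * fps_X" .
  have B_eq: "B = 1 - 2 * (fps_X * C_gf)"
  proof (rule fps_ext)
    fix n
    show "B $ n = (1 - 2 * (fps_X * C_gf)) $ n"
    proof (cases n)
      case (Suc m)
      then show ?thesis
        using neg4_power_times_half_gchoose_Suc[of m]
        by (simp add: B_def fps_compose_linear fps_binomial_def C_gf_def numeral_fps_const)
    qed (simp add: B_def fps_compose_linear)
  qed
  have "fps_X * (4 * (1 + fps_X * C_gf ^ 2 - C_gf)) = B ^ 2 - (1 - 4 * fps_X)"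
    unfolding B_eq by (simp add: algebra_simps power2_eq_square)
  then have "fps_X * (4 * (1 + fps_X * C_gf ^ 2 - C_gf)) = 0"
    using B_square by simp
  then show ?thesis
    by (simp add: numeral_fps_const)
qed

lemma D_gf_eq: "D_gf = fps_X * (1 + D_gf) ^ 2"
  using C_gf_eq by (simp add: D_gf_def)

lemma inverse_one_minus_4X: "inverse (1 - 4 * fps_X :: real fps) = Abs_fps (\<lambda>n. 4 ^ n)"
proof (rule fps_inverse_unique)
  show "(1 - 4 * fps_X) * Abs_fps (\<lambda>n. 4 ^ n) = (1 :: real fps)"
  proof (rule fps_ext)
    fix n
    show "((1 - 4 * fps_X) * Abs_fps (\<lambda>n. 4 ^ n)) $ n = (1 :: real fps) $ n"
      by (cases n) (simp_all add: algebra_simps numeral_fps_const)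
  qed
qed

lemma D_gf_power_Suc_times:
  "D_gf ^ Suc k * F = fps_X * (D_gf ^ k * F + 2 * (D_gf ^ Suc k * F) + D_gf ^ Suc (Suc k) * F)"
proof -
  have "D_gf ^ Suc k * F = D_gf ^ k * F * (fps_X * (1 + D_gf) ^ 2)"
    by (simp only: D_gf_eq[symmetric]) (simp add: mult_ac)
  also have "\<dots> = fps_X * (D_gf ^ k * F + 2 * (D_gf ^ Suc k * F) + D_gf ^ Suc (Suc k) * F)"
    by (simp add: algebra_simps power2_eq_square)
  finally show ?thesis .
qed

lemma card_M_eq_nth:
  "real (card (M j n)) = (D_gf ^ j * inverse (1 - 4 * fps_X)) $ n"
proof (induction n arbitrary: j)
  case 0
  then show ?case
    by (cases j) (simp_all add: card_M_0 M_Suc_0 inverse_one_minus_4X D_gf_def)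
next
  case (Suc n)
  show ?case
  proof (cases j)
    case 0
    then show ?thesis by (simp add: card_M_0 inverse_one_minus_4X)
  next
    case (Suc k)
    let ?G = "inverse (1 - 4 * fps_X) :: real fps"
    have "(D_gf ^ Suc k * ?G) $ Suc n
        = (D_gf ^ k * ?G) $ n + 2 * (D_gf ^ Suc k * ?G) $ n + (D_gf ^ Suc (Suc k) * ?G) $ n"
      by (subst D_gf_power_Suc_times) (simp add: numeral_fps_const)
    then show ?thesis
      unfolding Suc by (simp add: card_M_Suc Suc.IH)
  qed
qed

theorem corollary3p4:
  fixes i :: nat
  assumes "i \<ge> 1"
  shows "M_gf i = D_gf ^ i / (1 - 4 * fps_X)"
proof -
  have "(1 - 4 * fps_X :: real fps) $ 0 \<noteq> 0"
    by (simp add: numeral_fps_const)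
  then show ?thesis
    by (simp add: M_gf_def card_M_eq_nth fps_divide_unit fps_nth_inverse)
qed

end
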